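(* Let $N\ge 1$ and $\tilde m=(0,m_1,\dots,m_{N-1})^T\in\mathbb{R}^{N}$. Let $\tilde a,\tilde b\in\mathbb{R}^N$ be vectors whose first entries both equal $1$ and which satisfy $$\mathcal{T}(\tilde m)\tilde a=\Lambda\tilde a,\qquad \mathcal{T}(\tilde m)\tilde b=-\Lambda\tilde b.$$ Then $\mathcal{T}(\tilde a)\,\mathcal{T}(\tilde b)=I$, the $N\times N$ identity matrix.
   Context: For $\mathbf{x}=(x_1,\dots,x_N)^T\in\mathbb{R}^N$, $\mathcal{T}(\mathbf{x})$ denotes the $N\times N$ lower triangular Toeplitz matrix whose first column is $\mathbf{x}$, i.e. $\mathcal{T}(\mathbf{x})_{ij}=x_{i-j+1}$ for $i\ge j$ and $0$ for $i<j$. $\Lambda=\mathrm{diag}(0,1,2,\dots,N-1)$. *)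

theory Defs
  imports "Jordan_Normal_Form.Matrix"
begin

definition toeplitz_lower :: "real vec \<Rightarrow> real mat" where
  "toeplitz_lower x = mat (dim_vec x) (dim_vec x)
     (\<lambda>(i,j). if j \<le> i then x $ (i - j) else 0)"

definition Lambda_mat :: "nat \<Rightarrow> real mat" where
  "Lambda_mat N = mat N N (\<lambda>(i,j). if i = j then real i else 0)"

end

theory Submission imports Defs begin

(* Read a vector x of length N as the truncated power series
   X(z) = sum_k x_k z^k, and let A, B, M be the series of a, b, m.  A lower
   triangular Toeplitz matrix T(x) acts as multiplication by X modulo z^N, and
   Lambda acts as the derivation z d/dz.  The hypotheses therefore say
   z A' = M A and z B' = -M B modulo z^N.  By the Leibniz rule,
   z (AB)' = (z A') B + A (z B') = M A B - A M B = 0 modulo z^N, so every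
   coefficient of AB of degree 0 < n < N vanishes, while the constant one is
   a_0 b_0 = 1.  Hence T(a) T(b) = T(ab) = T(e_0) = I.  (The hypothesis m_0 = 0
   is implied by the others and not needed.) *)

definition conv :: "(nat \<Rightarrow> 'a::comm_semiring_1) \<Rightarrow> (nat \<Rightarrow> 'a) \<Rightarrow> nat \<Rightarrow> 'a" where
  "conv f g n = (\<Sum>k\<le>n. f k * g (n - k))"

lemma conv_cong:
  assumes "\<And>i. i \<le> n \<Longrightarrow> f i = f' i" and "\<And>i. i \<le> n \<Longrightarrow> g i = g' i"
  shows "conv f g n = conv f' g' n"
  unfolding conv_def using assms by (intro sum.cong) auto

lemma conv_commute: "conv f g n = conv g f n"
  unfolding conv_def
  by (rule sum.reindex_bij_witness[where i="\<lambda>k. n - k" and j="\<lambda>k. n - k"])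
     (auto simp: mult.commute)

text \<open>Both bracketings of a triple product sum over all splittings n = k + p + q.\<close>
lemma conv_assoc: "conv (conv h f) g n = conv h (conv f g) n"
proof -
  let ?T = "{(k, p, q). k + p + q = n}"
  let ?F = "\<lambda>(k, p, q). h k * f p * g q"
  have "conv (conv h f) g n = (\<Sum>(j, k)\<in>Sigma {..n} (\<lambda>j. {..j}). h k * f (j - k) * g (n - j))"
    unfolding conv_def by (simp add: sum.Sigma sum_distrib_right)
  also have "\<dots> = sum ?F ?T"
    by (rule sum.reindex_bij_witness[where i="\<lambda>(k, p, q). (k + p, k)"
          and j="\<lambda>(j, k). (k, j - k, n - j)"]) auto
  also have "\<dots> = (\<Sum>(k, p)\<in>Sigma {..n} (\<lambda>k. {..n - k}). h k * f p * g (n - k - p))"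
    by (rule sum.reindex_bij_witness[where i="\<lambda>(k, p). (k, p, n - k - p)"
          and j="\<lambda>(k, p, q). (k, p)"]) auto
  also have "\<dots> = conv h (conv f g) n"
    unfolding conv_def by (simp add: sum.Sigma sum_distrib_left mult.assoc)
  finally show ?thesis .
qed

text \<open>Leibniz rule for the derivation "multiply the n-th coefficient by n" (that is, z d/dz).\<close>
lemma conv_leibniz:
  fixes f g :: "nat \<Rightarrow> 'a::comm_ring_1"
  shows "of_nat n * conv f g n
       = conv (\<lambda>i. of_nat i * f i) g n + conv f (\<lambda>i. of_nat i * g i) n"
proof -
  have "of_nat n * (f k * g (n - k)) = of_nat k * f k * g (n - k) + f k * (of_nat (n - k) * g (n - k))"
    if "k \<le> n" for k
    using that by (simp add: algebra_simps)
  then show ?thesis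
    unfolding conv_def by (simp add: sum_distrib_left sum.distrib[symmetric])
qed

lemma conv_eigen_vanish:
  fixes f g h :: "nat \<Rightarrow> 'a::comm_ring_1"
  assumes f: "\<And>i. i < N \<Longrightarrow> of_nat i * f i = conv h f i"
    and g: "\<And>i. i < N \<Longrightarrow> of_nat i * g i = - conv h g i"
    and n: "n < N"
  shows "of_nat n * conv f g n = 0"
proof -
  have "of_nat n * conv f g n = conv (conv h f) g n + conv f (\<lambda>i. - conv h g i) n"
    unfolding conv_leibniz using n f g by (intro arg_cong2[where f="(+)"] conv_cong) auto
  also have "conv f (\<lambda>i. - conv h g i) n = - conv f (conv h g) n"
    by (simp add: conv_def sum_negf)
  also have "conv f (conv h g) n = conv (conv h f) g n"
  proof -
    have "conv f (conv h g) n = conv (conv f h) g n"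
      by (rule conv_assoc[symmetric])
    also have "\<dots> = conv (conv h f) g n"
      by (intro conv_cong conv_commute refl)
    finally show ?thesis .
  qed
  finally show ?thesis by simp
qed

lemma conv_eigen_inverse:
  fixes f g h :: "nat \<Rightarrow> 'a::field_char_0"
  assumes "\<And>i. i < N \<Longrightarrow> of_nat i * f i = conv h f i"
    and "\<And>i. i < N \<Longrightarrow> of_nat i * g i = - conv h g i"
    and "f 0 = 1" and "g 0 = 1" and "n < N"
  shows "conv f g n = (if n = 0 then 1 else 0)"
proof (cases "n = 0")
  case True
  then show ?thesis using assms(3,4) by (simp add: conv_def)
next
  case False
  with conv_eigen_vanish[OF assms(1,2,5)] show ?thesis by simp
qed

lemma toeplitz_lower_dims [simp]:
  "dim_row (toeplitz_lower x) = dim_vec x" "dim_col (toeplitz_lower x) = dim_vec x"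
  by (simp_all add: toeplitz_lower_def)

lemma sum_lessThan_interval:
  fixes F :: "nat \<Rightarrow> 'a::comm_monoid_add"
  assumes "i < N"
  shows "(\<Sum>k<N. if j \<le> k \<and> k \<le> i then F k else 0) = (\<Sum>k\<in>{j..i}. F k)"
proof -
  have "(\<Sum>k<N. if j \<le> k \<and> k \<le> i then F k else 0) = sum F ({..<N} \<inter> {k. j \<le> k \<and> k \<le> i})"
    by (simp add: sum.inter_restrict)
  also have "{..<N} \<inter> {k. j \<le> k \<and> k \<le> i} = {j..i}"
    using assms by auto
  finally show ?thesis .
qed

lemma toeplitz_lower_mult_vec_nth:
  assumes "dim_vec y = dim_vec x" and "i < dim_vec x"
  shows "(toeplitz_lower x *\<^sub>v y) $ i = conv (($) x) (($) y) i"
proof -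
  have "(toeplitz_lower x *\<^sub>v y) $ i = (\<Sum>k<dim_vec x. if 0 \<le> k \<and> k \<le> i then x $ (i - k) * y $ k else 0)"
    using assms by (simp add: toeplitz_lower_def scalar_prod_def lessThan_atLeast0 if_distrib[of "\<lambda>t. t * _"] cong: if_cong)
  also have "\<dots> = (\<Sum>k\<in>{0..i}. x $ (i - k) * y $ k)"
    by (rule sum_lessThan_interval[OF assms(2)])
  also have "\<dots> = conv (($) x) (($) y) i"
    unfolding conv_def atMost_atLeast0[symmetric]
    by (rule sum.reindex_bij_witness[where i="\<lambda>k. i - k" and j="\<lambda>k. i - k"]) auto
  finally show ?thesis .
qed

lemma Lambda_mat_dims [simp]: "dim_row (Lambda_mat N) = N" "dim_col (Lambda_mat N) = N"
  by (simp_all add: Lambda_mat_def)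

lemma Lambda_mat_mult_vec_nth:
  assumes "dim_vec y = N" and "i < N"
  shows "(Lambda_mat N *\<^sub>v y) $ i = real i * y $ i"
  using assms unfolding Lambda_mat_def
  by (simp add: scalar_prod_def if_distrib[of "\<lambda>t. t * _"] cong: if_cong)

lemma toeplitz_lower_mult:
  assumes "dim_vec x = N" and "dim_vec y = N"
  shows "toeplitz_lower x * toeplitz_lower y = toeplitz_lower (vec N (conv (($) x) (($) y)))"
proof (rule eq_matI)
  fix i j assume "i < dim_row (toeplitz_lower (vec N (conv (($) x) (($) y))))"
    and "j < dim_col (toeplitz_lower (vec N (conv (($) x) (($) y))))"
  then have i: "i < N" and j: "j < N" by simp_all
  have "(toeplitz_lower x * toeplitz_lower y) $$ (i, j)
      = (\<Sum>k<N. if j \<le> k \<and> k \<le> i then x $ (i - k) * y $ (k - j) else 0)"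
    using i j assms by (auto simp: toeplitz_lower_def scalar_prod_def lessThan_atLeast0 intro!: sum.cong)
  also have "\<dots> = (\<Sum>k\<in>{j..i}. x $ (i - k) * y $ (k - j))"
    by (rule sum_lessThan_interval[OF i])
  also have "\<dots> = (if j \<le> i then conv (($) x) (($) y) (i - j) else 0)"
  proof (cases "j \<le> i")
    case True
    show ?thesis
      unfolding conv_def if_P[OF True]
      by (rule sum.reindex_bij_witness[where i="\<lambda>p. i - p" and j="\<lambda>k. i - k"]) (use True in auto)
  qed simp
  also have "\<dots> = toeplitz_lower (vec N (conv (($) x) (($) y))) $$ (i, j)"
    using i j by (simp add: toeplitz_lower_def)
  finally show "(toeplitz_lower x * toeplitz_lower y) $$ (i, j)
      = toeplitz_lower (vec N (conv (($) x) (($) y))) $$ (i, j)" .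
qed (use assms in simp_all)

lemma toeplitz_lower_unit_vec: "toeplitz_lower (unit_vec N 0) = 1\<^sub>m N"
  by (rule eq_matI) (auto simp: toeplitz_lower_def unit_vec_def)

theorem lemma1:
  fixes N :: nat and m a b :: "real vec"
  assumes "N \<ge> 1"
    and "dim_vec m = N" and "dim_vec a = N" and "dim_vec b = N"
    and "m $ 0 = 0"
    and "a $ 0 = 1" and "b $ 0 = 1"
    and "toeplitz_lower m *\<^sub>v a = Lambda_mat N *\<^sub>v a"
    and "toeplitz_lower m *\<^sub>v b = - (Lambda_mat N *\<^sub>v b)"
  shows "toeplitz_lower a * toeplitz_lower b = 1\<^sub>m N"
proof -
  have eigen_a: "real i * a $ i = conv (($) m) (($) a) i" if "i < N" for i
    using toeplitz_lower_mult_vec_nth[of a m i] Lambda_mat_mult_vec_nth[of a N i]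
      arg_cong[OF assms(8), of "\<lambda>v. v $ i"] that assms(2,3) by simp
  have eigen_b: "real i * b $ i = - conv (($) m) (($) b) i" if "i < N" for i
    using toeplitz_lower_mult_vec_nth[of b m i] Lambda_mat_mult_vec_nth[of b N i]
      arg_cong[OF assms(9), of "\<lambda>v. v $ i"] that assms(2,4) by simp
  have "vec N (conv (($) a) (($) b)) = unit_vec N 0"
    using conv_eigen_inverse[of N "($) a" "($) m" "($) b", OF eigen_a eigen_b assms(6,7)]
    by (auto simp: unit_vec_def)
  then show ?thesis
    using assms(3,4) by (simp add: toeplitz_lower_mult toeplitz_lower_unit_vec)
qed

end
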